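(* Let $\mathbb{X}\subseteq\mathbb{R}^n$, let $\mathbb{Y}$ be a finite set of classes with $|\mathbb{Y}|\ge 2$, and let $D$ be a distribution on $\mathbb{X}\times\mathbb{Y}$ with joint density $p(\bm{x},k)$, marginal $p(\bm{x})=\sum_k p(\bm{x},k)$ and posterior $p(\mathrm{y}=k\mid\mathbf{x}=\bm{x})=p(\bm{x},k)/p(\bm{x})$. Fix a distance $d$ on $\mathbb{X}$ and $\epsilon>0$, and let $\mathbb{V}_{\bm{x}}=\{\bm{x'}: d(\bm{x},\bm{x'})\le\epsilon\}$. For a classifier $h:\mathbb{X}\to\mathbb{Y}$, $\operatorname{Rob}(h,\bm{x},y;\mathbb{V}_{\bm{x}})$ holds iff (i) no $\bm{x'}$ with $d(\bm{x},\bm{x'})\le\epsilon$ has $h(\bm{x'})\ne y$, and (ii) no $(\bm{x'},y')$ with $p(\bm{x'},y')>0$ and $d(\bm{x},\bm{x'})\le\epsilon$ has $h(\bm{x'})\neq y'$. Let $\zeta^\sharp_D=\inf_{h\text{ measurable}}\mathbb{E}_{(\mathbf{x},\mathrm{y})\sim D}[1-\mathbf{1}_{\operatorname{Rob}(h,\mathbf{x},\mathrm{y};\mathbb{V}_{\mathbf{x}})}]$ and let $\beta_D=\int(1-\max_k p(\mathrm{y}=k\mid\mathbf{x}=\bm{x}))\,p(\bm{x})\,d\bm{x}$ be the Bayes error. Then $$\zeta^\sharp_D\ \ge\ \frac{|\mathbb{Y}|}{|\mathbb{Y}|-1}\,\beta_D.$$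
   Context: $\zeta^\sharp_D$ is called the irreducible robustness error of $D$; $\beta_D$ is the Bayes error (the minimum misclassification probability over measurable classifiers). *)

theory Defs
  imports "HOL-Probability.Probability"
begin

definition jointD :: "'a::euclidean_space set \<Rightarrow> 'c set \<Rightarrow> ('a \<Rightarrow> 'c \<Rightarrow> real) \<Rightarrow> ('a \<times> 'c) measure" where
  "jointD X Ys p = density (restrict_space lborel X \<Otimes>\<^sub>M count_space Ys) (\<lambda>(x, k). ennreal (p x k))"

definition marginal :: "'c set \<Rightarrow> ('a \<Rightarrow> 'c \<Rightarrow> real) \<Rightarrow> 'a \<Rightarrow> real" where
  "marginal Ys p x = (\<Sum>k\<in>Ys. p x k)"

definition posterior :: "'c set \<Rightarrow> ('a \<Rightarrow> 'c \<Rightarrow> real) \<Rightarrow> 'c \<Rightarrow> 'a \<Rightarrow> real" where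
  "posterior Ys p k x = p x k / marginal Ys p x"

definition Rob :: "'a set \<Rightarrow> 'c set \<Rightarrow> ('a \<Rightarrow> 'c \<Rightarrow> real) \<Rightarrow> ('a \<Rightarrow> 'a \<Rightarrow> real) \<Rightarrow> real
    \<Rightarrow> ('a \<Rightarrow> 'c) \<Rightarrow> 'a \<Rightarrow> 'c \<Rightarrow> bool" where
  "Rob X Ys p d \<epsilon> h x y \<longleftrightarrow>
     (\<forall>x'\<in>X. d x x' \<le> \<epsilon> \<longrightarrow> h x' = y) \<and>
     (\<forall>x'\<in>X. \<forall>y'\<in>Ys. p x' y' > 0 \<and> d x x' \<le> \<epsilon> \<longrightarrow> h x' = y')"

definition irreducible_rob_error :: "'a::euclidean_space set \<Rightarrow> 'c set \<Rightarrow> ('a \<Rightarrow> 'c \<Rightarrow> real)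
    \<Rightarrow> ('a \<Rightarrow> 'a \<Rightarrow> real) \<Rightarrow> real \<Rightarrow> ennreal" where
  "irreducible_rob_error X Ys p d \<epsilon> =
     (INF h \<in> restrict_space lborel X \<rightarrow>\<^sub>M count_space Ys.
        \<integral>\<^sup>+ z. ennreal (1 - (if Rob X Ys p d \<epsilon> h (fst z) (snd z) then 1 else 0)) \<partial>jointD X Ys p)"

definition bayes_error :: "'a::euclidean_space set \<Rightarrow> 'c set \<Rightarrow> ('a \<Rightarrow> 'c \<Rightarrow> real) \<Rightarrow> real" where
  "bayes_error X Ys p =
     (\<integral>x\<in>X. (1 - Max ((\<lambda>k. posterior Ys p k x) ` Ys)) * marginal Ys p x \<partial>lborel)"

end

theory Submission
  imports Defs
begin

text \<open>Robustness at \<open>(x, y)\<close> already constrains \<open>h x\<close> itself (as \<open>d x x = 0 \<le> \<epsilon>\<close>):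
  it forces \<open>y\<close> to be the only label of positive density at \<open>x\<close>, so the conditional Bayes
  error \<open>1 - max\<^sub>k p(k | x)\<close> vanishes there. Wherever robustness fails the loss is \<open>1\<close>, which
  dominates \<open>K/(K-1)\<close> times the conditional Bayes error because the largest of \<open>K\<close> posteriors
  is at least \<open>1/K\<close>. So for every classifier the robust loss dominates \<open>K/(K-1)\<close> times the
  conditional Bayes error \<open>D\<close>-almost everywhere, and integrating against \<open>D\<close> gives the bound.\<close>

definition conditional_bayes_error :: "'c set \<Rightarrow> ('a \<Rightarrow> 'c \<Rightarrow> real) \<Rightarrow> 'a \<Rightarrow> real" where
  "conditional_bayes_error Ys p x = 1 - Max ((\<lambda>k. posterior Ys p k x) ` Ys)"

lemma bayes_error_conditional:
  "bayes_error X Ys p = (\<integral>x\<in>X. conditional_bayes_error Ys p x * marginal Ys p x \<partial>lborel)"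
  unfolding bayes_error_def conditional_bayes_error_def ..

context
  fixes Ys :: "'c set" and p :: "'a \<Rightarrow> 'c \<Rightarrow> real" and x :: 'a
  assumes finite: "finite Ys" and nonneg: "\<And>k. k \<in> Ys \<Longrightarrow> 0 \<le> p x k"
begin

lemma density_le_marginal: "k \<in> Ys \<Longrightarrow> p x k \<le> marginal Ys p x"
  unfolding marginal_def by (rule member_le_sum) (use finite nonneg in auto)

lemma posterior_le_1: "k \<in> Ys \<Longrightarrow> posterior Ys p k x \<le> 1"
  using density_le_marginal[of k] nonneg[of k] by (auto simp: posterior_def divide_le_eq_1)

lemma sum_posterior: "marginal Ys p x \<noteq> 0 \<Longrightarrow> (\<Sum>k\<in>Ys. posterior Ys p k x) = 1"
  unfolding posterior_def by (simp add: marginal_def flip: sum_divide_distrib)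

lemma conditional_bayes_error_nonneg: "Ys \<noteq> {} \<Longrightarrow> 0 \<le> conditional_bayes_error Ys p x"
  unfolding conditional_bayes_error_def using finite posterior_le_1 by simp

lemma card_mult_conditional_bayes_error_le:
  assumes "Ys \<noteq> {}" and "marginal Ys p x \<noteq> 0"
  shows "real (card Ys) * conditional_bayes_error Ys p x \<le> real (card Ys) - 1"
proof -
  let ?M = "Max ((\<lambda>k. posterior Ys p k x) ` Ys)"
  have "1 = (\<Sum>k\<in>Ys. posterior Ys p k x)"
    using sum_posterior assms(2) by simp
  also have "\<dots> \<le> real (card Ys) * ?M"
    by (rule sum_bounded_above) (simp add: finite)
  finally show ?thesis
    unfolding conditional_bayes_error_def by (simp add: algebra_simps)
qed

lemma conditional_bayes_error_single_label:
  assumes "k \<in> Ys" and "0 < p x k" and others: "\<And>k'. k' \<in> Ys \<Longrightarrow> k' \<noteq> k \<Longrightarrow> p x k' = 0"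
  shows "conditional_bayes_error Ys p x = 0"
proof -
  have "marginal Ys p x = p x k"
    unfolding marginal_def using finite assms(1) others by (simp add: sum.remove)
  then have "posterior Ys p k x = 1"
    unfolding posterior_def using assms(2) by simp
  then have "Max ((\<lambda>k. posterior Ys p k x) ` Ys) = 1"
    using finite assms(1) posterior_le_1 by (intro Max_eqI) auto
  then show ?thesis
    unfolding conditional_bayes_error_def by simp
qed

end

lemma Rob_unique_positive_label:
  assumes "Rob X Ys p d \<epsilon> h x k" and "x \<in> X" and "d x x \<le> \<epsilon>"
    and "k' \<in> Ys" and "0 < p x k'"
  shows "k' = k"
proof -
  have "h x = k"
    using assms(1-3) unfolding Rob_def by blast
  moreover have "h x = k'"
    using assms unfolding Rob_def by blast
  ultimately show ?thesis by simp
qed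

lemma robust_loss_ge_conditional_bayes_error:
  assumes "finite Ys" and "card Ys \<ge> 2" and nonneg: "\<And>k. k \<in> Ys \<Longrightarrow> 0 \<le> p x k"
    and "x \<in> X" and "d x x \<le> \<epsilon>" and "k \<in> Ys" and "0 < p x k"
  shows "real (card Ys) / (real (card Ys) - 1) * conditional_bayes_error Ys p x
           \<le> 1 - (if Rob X Ys p d \<epsilon> h x k then 1 else 0)"
proof (cases "Rob X Ys p d \<epsilon> h x k")
  case True
  have others: "p x k' = 0" if "k' \<in> Ys" "k' \<noteq> k" for k'
  proof (rule ccontr)
    assume "p x k' \<noteq> 0"
    then have "0 < p x k'"
      using nonneg[OF that(1)] by simp
    then show False
      using Rob_unique_positive_label[OF True \<open>x \<in> X\<close> \<open>d x x \<le> \<epsilon>\<close> that(1)] that(2) by simp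
  qed
  have "conditional_bayes_error Ys p x = 0"
    by (rule conditional_bayes_error_single_label[of Ys p x, OF assms(1) nonneg assms(6,7) others])
  with True show ?thesis by simp
next
  case False
  have "Ys \<noteq> {}" using \<open>k \<in> Ys\<close> by blast
  moreover have "marginal Ys p x \<noteq> 0"
    using density_le_marginal[of Ys p x, OF assms(1) nonneg \<open>k \<in> Ys\<close>] \<open>0 < p x k\<close> by linarith
  ultimately have "real (card Ys) * conditional_bayes_error Ys p x \<le> real (card Ys) - 1"
    using card_mult_conditional_bayes_error_le[of Ys p x, OF assms(1) nonneg] by simp
  moreover have "0 < real (card Ys) - 1"
    using \<open>card Ys \<ge> 2\<close> by simp
  ultimately show ?thesis
    using False by (simp add: pos_divide_le_eq)
qed

lemma ennreal_integral_le_nn_integral: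
  fixes f :: "'a \<Rightarrow> real"
  assumes "AE x in M. 0 \<le> f x"
  shows "ennreal (integral\<^sup>L M f) \<le> (\<integral>\<^sup>+ x. ennreal (f x) \<partial>M)"
proof (cases "integrable M f")
  case True
  then show ?thesis using assms by (simp add: nn_integral_eq_integral)
qed (simp add: not_integrable_integral_eq)

lemma borel_measurable_pair_count_space:
  assumes "countable Ys" and "\<And>k. k \<in> Ys \<Longrightarrow> (\<lambda>x. p x k) \<in> borel_measurable M"
  shows "(\<lambda>z. p (fst z) (snd z)) \<in> borel_measurable (M \<Otimes>\<^sub>M count_space Ys)"
  by (rule measurable_compose_countable'[where f = "\<lambda>k z. p (fst z) k" and I = Ys])
    (use assms in auto)

lemma borel_measurable_jointD_density:
  fixes X :: "'a::euclidean_space set"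
  assumes "finite Ys" and "\<And>k. k \<in> Ys \<Longrightarrow> (\<lambda>x. p x k) \<in> borel_measurable lborel"
  shows "(\<lambda>z. p (fst z) (snd z)) \<in> borel_measurable (restrict_space lborel X \<Otimes>\<^sub>M count_space Ys)"
  using assms by (intro borel_measurable_pair_count_space countable_finite measurable_restrict_space1)

lemma space_jointD: "space (jointD X Ys p) = X \<times> Ys"
  by (simp add: jointD_def space_pair_measure space_restrict_space)

lemma AE_jointD_density_pos:
  fixes X :: "'a::euclidean_space set"
  assumes "finite Ys"
    and "\<And>k. k \<in> Ys \<Longrightarrow> (\<lambda>x. p x k) \<in> borel_measurable lborel"
  shows "AE z in jointD X Ys p. fst z \<in> X \<and> snd z \<in> Ys \<and> 0 < p (fst z) (snd z)"
proof -
  have "AE z in jointD X Ys p. 0 < p (fst z) (snd z)"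
    unfolding jointD_def
    using borel_measurable_jointD_density[OF assms]
    by (subst AE_density) (auto simp: case_prod_beta)
  then show ?thesis
    by (rule AE_mp) (auto intro!: AE_I2 simp: space_jointD)
qed

lemma nn_integral_jointD:
  fixes X :: "'a::euclidean_space set"
  assumes "finite Ys" and "\<And>k. k \<in> Ys \<Longrightarrow> (\<lambda>x. p x k) \<in> borel_measurable lborel"
    and f: "f \<in> borel_measurable (restrict_space lborel X \<Otimes>\<^sub>M count_space Ys)"
  shows "(\<integral>\<^sup>+ z. f z \<partial>jointD X Ys p)
           = (\<integral>\<^sup>+ x. (\<Sum>k\<in>Ys. ennreal (p x k) * f (x, k)) \<partial>restrict_space lborel X)"
proof -
  interpret Ys: sigma_finite_measure "count_space Ys"
    using \<open>finite Ys\<close> by (rule sigma_finite_measure_count_space_finite)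
  note [measurable] = borel_measurable_jointD_density[OF assms(1,2)] f
  have "(\<integral>\<^sup>+ z. f z \<partial>jointD X Ys p)
          = (\<integral>\<^sup>+ z. ennreal (p (fst z) (snd z)) * f z \<partial>restrict_space lborel X \<Otimes>\<^sub>M count_space Ys)"
    unfolding jointD_def by (subst nn_integral_density) (auto simp: case_prod_beta)
  also have "\<dots> = (\<integral>\<^sup>+ x. \<integral>\<^sup>+ k. ennreal (p x k) * f (x, k) \<partial>count_space Ys \<partial>restrict_space lborel X)"
    using Ys.nn_integral_fst[of "\<lambda>z. ennreal (p (fst z) (snd z)) * f z"] by simp
  finally show ?thesis
    using \<open>finite Ys\<close> by (simp add: nn_integral_count_space_finite)
qed

lemma nn_integral_jointD_marginal:
  fixes X :: "'a::euclidean_space set"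
  assumes "finite Ys" and nonneg: "\<And>x k. x \<in> X \<Longrightarrow> k \<in> Ys \<Longrightarrow> 0 \<le> p x k"
    and "\<And>k. k \<in> Ys \<Longrightarrow> (\<lambda>x. p x k) \<in> borel_measurable lborel"
    and g: "g \<in> borel_measurable lborel" and g_nonneg: "\<And>x. x \<in> X \<Longrightarrow> 0 \<le> g x"
  shows "(\<integral>\<^sup>+ z. ennreal (g (fst z)) \<partial>jointD X Ys p)
           = (\<integral>\<^sup>+ x. ennreal (g x * marginal Ys p x) \<partial>restrict_space lborel X)"
proof -
  have "g \<in> borel_measurable (restrict_space lborel X)"
    using g by (rule measurable_restrict_space1)
  then have meas: "(\<lambda>z. ennreal (g (fst z))) \<in> borel_measurable (restrict_space lborel X \<Otimes>\<^sub>M count_space Ys)"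
    by measurable
  have "(\<integral>\<^sup>+ z. ennreal (g (fst z)) \<partial>jointD X Ys p)
      = (\<integral>\<^sup>+ x. (\<Sum>k\<in>Ys. ennreal (p x k) * ennreal (g x)) \<partial>restrict_space lborel X)"
    using nn_integral_jointD[OF assms(1,3) meas] by simp
  also have "\<dots> = (\<integral>\<^sup>+ x. ennreal (g x * marginal Ys p x) \<partial>restrict_space lborel X)"
  proof (rule nn_integral_cong)
    fix x assume "x \<in> space (restrict_space lborel X)"
    then have x: "x \<in> X" by (simp add: space_restrict_space)
    have "(\<Sum>k\<in>Ys. ennreal (p x k) * ennreal (g x)) = (\<Sum>k\<in>Ys. ennreal (p x k * g x))"
      using g_nonneg[OF x] by (simp add: ennreal_mult'')
    also have "\<dots> = ennreal (\<Sum>k\<in>Ys. p x k * g x)"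
      using nonneg[OF x] g_nonneg[OF x] by (intro sum_ennreal) simp
    finally show "(\<Sum>k\<in>Ys. ennreal (p x k) * ennreal (g x)) = ennreal (g x * marginal Ys p x)"
      by (simp add: marginal_def sum_distrib_left mult.commute)
  qed
  finally show ?thesis .
qed

lemma borel_measurable_conditional_bayes_error:
  assumes "finite Ys" and "\<And>k. k \<in> Ys \<Longrightarrow> (\<lambda>x. p x k) \<in> borel_measurable M"
  shows "conditional_bayes_error Ys p \<in> borel_measurable M"
proof -
  have "marginal Ys p \<in> borel_measurable M"
    unfolding marginal_def[abs_def] using assms(2) by measurable
  then have "(\<lambda>x. posterior Ys p k x) \<in> borel_measurable M" if "k \<in> Ys" for k
    unfolding posterior_def using assms(2)[OF that] by measurable
  then show ?thesis
    unfolding conditional_bayes_error_def[abs_def] using assms(1) by measurable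
qed

lemma ennreal_bayes_error_le_nn_integral_jointD:
  fixes X :: "'a::euclidean_space set"
  assumes X: "X \<in> sets lborel" and "finite Ys" and "Ys \<noteq> {}"
    and nonneg: "\<And>x k. x \<in> X \<Longrightarrow> k \<in> Ys \<Longrightarrow> 0 \<le> p x k"
    and "\<And>k. k \<in> Ys \<Longrightarrow> (\<lambda>x. p x k) \<in> borel_measurable lborel" and "0 \<le> c"
  shows "ennreal (c * bayes_error X Ys p)
           \<le> (\<integral>\<^sup>+ z. ennreal (c * conditional_bayes_error Ys p (fst z)) \<partial>jointD X Ys p)"
proof -
  define g where "g x = c * conditional_bayes_error Ys p x" for x
  have g_nonneg: "0 \<le> g x" if "x \<in> X" for x
    unfolding g_def using conditional_bayes_error_nonneg[of Ys p x] assms(2,3) nonneg[OF that] \<open>0 \<le> c\<close>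
    by simp
  have "g \<in> borel_measurable lborel"
    using borel_measurable_conditional_bayes_error[OF assms(2,5)] unfolding g_def by measurable
  note g_jointD = nn_integral_jointD_marginal[OF assms(2,4,5) this g_nonneg]
  have marginal_nonneg: "0 \<le> marginal Ys p x" if "x \<in> X" for x
    unfolding marginal_def using nonneg[OF that] by (simp add: sum_nonneg)
  have "c * bayes_error X Ys p = (\<integral>x. g x * marginal Ys p x \<partial>restrict_space lborel X)"
    unfolding bayes_error_conditional set_lebesgue_integral_def g_def
    using X by (simp add: integral_restrict_space ac_simps flip: integral_mult_right_zero)
  also have "ennreal \<dots> \<le> (\<integral>\<^sup>+ x. ennreal (g x * marginal Ys p x) \<partial>restrict_space lborel X)"
    using g_nonneg marginal_nonneg
    by (intro ennreal_integral_le_nn_integral AE_I2) (simp add: space_restrict_space)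
  also have "\<dots> = (\<integral>\<^sup>+ z. ennreal (g (fst z)) \<partial>jointD X Ys p)"
    by (rule g_jointD[symmetric])
  finally show ?thesis
    unfolding g_def .
qed

theorem corollary1:
  fixes X :: "'a::euclidean_space set" and Ys :: "'c set"
    and p :: "'a \<Rightarrow> 'c \<Rightarrow> real" and d :: "'a \<Rightarrow> 'a \<Rightarrow> real" and \<epsilon> :: real
  assumes "X \<in> sets lborel"
    and "finite Ys" and "card Ys \<ge> 2"
    and "\<And>x k. x \<in> X \<Longrightarrow> k \<in> Ys \<Longrightarrow> p x k \<ge> 0"
    and "\<And>k. k \<in> Ys \<Longrightarrow> (\<lambda>x. p x k) \<in> borel_measurable lborel"
    and "prob_space (jointD X Ys p)"
    and "Metric_space X d"
    and "\<epsilon> > 0"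
  shows "ennreal (real (card Ys) / (real (card Ys) - 1) * bayes_error X Ys p)
           \<le> irreducible_rob_error X Ys p d \<epsilon>"
proof -
  let ?c = "real (card Ys) / (real (card Ys) - 1)"
  have "Ys \<noteq> {}" and "0 \<le> ?c"
    using assms(3) by auto
  note bayes_le = ennreal_bayes_error_le_nn_integral_jointD[OF assms(1,2) this(1) assms(4,5) this(2)]
  show ?thesis
    unfolding irreducible_rob_error_def
  proof (rule INF_greatest)
    fix h :: "'a \<Rightarrow> 'c"
    let ?loss = "\<lambda>z. 1 - (if Rob X Ys p d \<epsilon> h (fst z) (snd z) then 1 else 0)"
    have "AE z in jointD X Ys p. ?c * conditional_bayes_error Ys p (fst z) \<le> ?loss z"
      using AE_jointD_density_pos[OF assms(2,5)]
    proof (rule eventually_mono)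
      fix z assume z: "fst z \<in> X \<and> snd z \<in> Ys \<and> 0 < p (fst z) (snd z)"
      moreover have "d (fst z) (fst z) \<le> \<epsilon>"
        using z Metric_space.mdist_zero[OF assms(7)] assms(8) by simp
      ultimately show "?c * conditional_bayes_error Ys p (fst z) \<le> ?loss z"
        using assms(4) by (intro robust_loss_ge_conditional_bayes_error[OF assms(2,3)]) auto
    qed
    then have "(\<integral>\<^sup>+ z. ennreal (?c * conditional_bayes_error Ys p (fst z)) \<partial>jointD X Ys p)
                 \<le> (\<integral>\<^sup>+ z. ennreal (?loss z) \<partial>jointD X Ys p)"
      by (intro nn_integral_mono_AE) (auto elim: eventually_mono intro: ennreal_leI)
    with bayes_le show "ennreal (?c * bayes_error X Ys p) \<le> (\<integral>\<^sup>+ z. ennreal (?loss z) \<partial>jointD X Ys p)"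
      by (rule order_trans)
  qed
qed

end
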